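(* Let $f:[0,1]^2\to[0,1]$ be any aggregator. Then the function $\lambda\mapsto R_\lambda(f)$ on $(0,1]$ is single-troughed: it is either monotone, or there is a point $\lambda_0$ such that $R_\lambda(f)$ is monotonically non-increasing for $\lambda\le\lambda_0$ and monotonically non-decreasing for $\lambda\ge\lambda_0$.
   Context: Setting: a binary world state $\omega\in\{0,1\}$ and two experts. An information structure $\theta$ consists of a prior $\mu=\Pr[\omega=1]\in(0,1)$ and finite signal spaces $\mathcal S_1,\mathcal S_2$ with a joint distribution of $(\omega,S_1,S_2)$ under which $S_1$ and $S_2$ are conditionally independent given $\omega$; $\Theta$ denotes the set of all such conditionally independent structures. Given a base rate consideration degree $\lambda\in(0,1]$, expert $i$ receiving signal $s_i$ reports $$x_i(s_i,\lambda)=\frac{\mu^\lambda\Pr[S_i=s_i\mid\omega=1]}{\mu^\lambda\Pr[S_i=s_i\mid\omega=1]+(1-\mu)^\lambda\Pr[S_i=s_i\mid\omega=0]},$$ i.e. the posterior odds equal $(\mu/(1-\mu))^\lambda$ times the likelihood ratio; $\lambda=1$ is the Bayesian posterior. Write $\mathbf x(\mathbf s,\lambda)=(x_1(s_1,\lambda),x_2(s_2,\lambda))$. The benchmark $f^*(\mathbf s)=\Pr_\theta[\omega=1\mid S_1=s_1,S_2=s_2]$ is the Bayesian aggregator with full knowledge of $\theta$. The loss is the squared loss $L(y,\omega)=(y-\omega)^2$. The regret of an aggregator $f:[0,1]^2\to[0,1]$ at degree $\lambda$ is $$R_\lambda(f)=\sup_{\theta\in\Theta}\mathbb E_\theta\big[L(f(\mathbf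 x(\mathbf s,\lambda)),\omega)-L(f^*(\mathbf s),\omega)\big].$$ *)

theory Defs
  imports Complex_Main
begin

text \<open>An information structure: prior mu = Pr[omega = 1], finite nonempty signal
  spaces S1, S2 (encoded as finite sets of naturals), and conditional signal
  distributions P_i omega s = Pr[S_i = s | omega] (omega = True means omega = 1).
  Conditional independence is built in: the joint probability of (omega, s1, s2)
  is Pr[omega] * P1 omega s1 * P2 omega s2.\<close>

type_synonym info_structure =
  "real \<times> nat set \<times> nat set \<times> (bool \<Rightarrow> nat \<Rightarrow> real) \<times> (bool \<Rightarrow> nat \<Rightarrow> real)"

definition cond_dist :: "nat set \<Rightarrow> (bool \<Rightarrow> nat \<Rightarrow> real) \<Rightarrow> bool" where
  "cond_dist S P \<longleftrightarrow> finite S \<and> S \<noteq> {} \<and>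
     (\<forall>w s. 0 \<le> P w s) \<and> (\<forall>w. (\<Sum>s\<in>S. P w s) = 1)"

definition valid_IS :: "info_structure \<Rightarrow> bool" where
  "valid_IS \<theta> = (case \<theta> of (mu, S1, S2, P1, P2) \<Rightarrow>
     0 < mu \<and> mu < 1 \<and> cond_dist S1 P1 \<and> cond_dist S2 P2)"

definition Theta :: "info_structure set" where
  "Theta = {\<theta>. valid_IS \<theta>}"

definition prior_w :: "real \<Rightarrow> bool \<Rightarrow> real" where
  "prior_w mu w = (if w then mu else 1 - mu)"

definition report :: "real \<Rightarrow> (bool \<Rightarrow> nat \<Rightarrow> real) \<Rightarrow> nat \<Rightarrow> real \<Rightarrow> real" where
  "report mu P s lam =
     mu powr lam * P True s / (mu powr lam * P True s + (1 - mu) powr lam * P False s)"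

definition bayes_post :: "info_structure \<Rightarrow> nat \<Rightarrow> nat \<Rightarrow> real" where
  "bayes_post \<theta> s1 s2 = (case \<theta> of (mu, S1, S2, P1, P2) \<Rightarrow>
     mu * P1 True s1 * P2 True s2 /
       (mu * P1 True s1 * P2 True s2 + (1 - mu) * P1 False s1 * P2 False s2))"

definition sq_loss :: "real \<Rightarrow> bool \<Rightarrow> real" where
  "sq_loss y w = (y - (if w then 1 else 0))\<^sup>2"

definition exp_regret :: "real \<Rightarrow> (real \<Rightarrow> real \<Rightarrow> real) \<Rightarrow> info_structure \<Rightarrow> real" where
  "exp_regret lam f \<theta> = (case \<theta> of (mu, S1, S2, P1, P2) \<Rightarrow>
     (\<Sum>w\<in>(UNIV::bool set). \<Sum>s1\<in>S1. \<Sum>s2\<in>S2.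
        prior_w mu w * P1 w s1 * P2 w s2 *
        (sq_loss (f (report mu P1 s1 lam) (report mu P2 s2 lam)) w
         - sq_loss (bayes_post \<theta> s1 s2) w)))"

definition regret :: "real \<Rightarrow> (real \<Rightarrow> real \<Rightarrow> real) \<Rightarrow> real" where
  "regret lam f = (SUP \<theta>\<in>Theta. exp_regret lam f \<theta>)"

end

theory Submission
  imports Defs "HOL-Analysis.Convex_Euclidean_Space"
begin

text \<open>Keeping the signals of an information structure fixed, the reports at degree \<open>\<lambda>\<close> under
  prior \<open>\<mu>\<close> coincide with the reports at degree \<open>\<lambda>'\<close> under the prior whose odds are
  \<open>(\<mu>/(1-\<mu>)) powr (\<lambda>/\<lambda>')\<close>. Hence the expected regret with fixed reports, viewed as a function
  \<open>T\<close> of the prior, satisfies \<open>T(\<mu>') \<le> R\<^sub>\<lambda>\<^sub>'(f)\<close> at that shifted prior \<open>\<mu>'\<close>. Since the expected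
  loss is affine and the Bayes risk concave in the prior, \<open>T\<close> is convex; for \<open>a < b < c\<close> the
  prior \<open>\<mu>\<close> lies between its shifts for \<open>a\<close> and \<open>c\<close>, so \<open>R\<^sub>b \<le> max R\<^sub>a R\<^sub>c\<close>.
  Continuity of \<open>T\<close> makes \<open>\<lambda> \<mapsto> R\<^sub>\<lambda>\<close> lower semicontinuous, and a quasiconvex lower
  semicontinuous function on \<open>(0,1]\<close> is single-troughed.\<close>

lemma quasiconvex_nondecreasing_after_rise:
  fixes R :: "real \<Rightarrow> real"
  assumes quasi: "\<And>a b c. 0 < a \<Longrightarrow> a < b \<Longrightarrow> b < c \<Longrightarrow> c \<le> 1 \<Longrightarrow> R b \<le> max (R a) (R c)"
    and rise: "0 < a" "a < b" "R a < R b"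
    and xy: "b \<le> x" "x \<le> y" "y \<le> 1"
  shows "R x \<le> R y"
proof -
  have "R b \<le> R x"
    using quasi[of a b x] rise xy by (cases "b < x") auto
  then show ?thesis
    using quasi[of a x y] rise xy by (cases "x < y") (auto simp: max_def split: if_splits)
qed

lemma lsc_le_of_islimpt:
  fixes R :: "'a::topological_space \<Rightarrow> real"
  assumes lsc: "\<And>r. r < R s \<Longrightarrow> eventually (\<lambda>x. r < R x) (at s within I)"
    and "J \<subseteq> I" "s islimpt J" "\<And>x. x \<in> J \<Longrightarrow> R x \<le> c"
  shows "R s \<le> c"
proof (rule ccontr)
  assume "\<not> R s \<le> c"
  then have "eventually (\<lambda>x. c < R x) (at s within J)"
    using lsc[of c] filter_leD[OF at_le[OF \<open>J \<subseteq> I\<close>]] by simp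
  moreover have "eventually (\<lambda>x. x \<in> J) (at s within J)"
    by (simp add: eventually_at_filter)
  ultimately have "eventually (\<lambda>x. False) (at s within J)"
    by eventually_elim (use assms(4) in force)
  with \<open>s islimpt J\<close> show False
    by (simp add: trivial_limit_within)
qed

lemma trough_extends_to_endpoint:
  fixes R :: "real \<Rightarrow> real"
  assumes lsc: "\<And>r. r < R s \<Longrightarrow> eventually (\<lambda>x. r < R x) (at s within {0<..1})"
    and s: "0 < s" "s \<le> 1"
    and left: "\<And>a b. 0 < a \<Longrightarrow> a \<le> b \<Longrightarrow> b < s \<Longrightarrow> R b \<le> R a"
    and right: "\<And>a b. s < a \<Longrightarrow> a \<le> b \<Longrightarrow> b \<le> 1 \<Longrightarrow> R a \<le> R b"
  shows "(\<forall>a b. 0 < a \<and> a \<le> b \<and> b \<le> s \<longrightarrow> R b \<le> R a)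
       \<and> (\<forall>a b. s \<le> a \<and> a \<le> b \<and> b \<le> 1 \<longrightarrow> R a \<le> R b)"
proof (intro conjI allI impI; elim conjE)
  fix a b assume ab: "0 < a" "a \<le> b" "b \<le> s"
  have "R s \<le> R a" if "a < s"
    by (rule lsc_le_of_islimpt[OF lsc, of "{a<..<s}"])
       (use that ab s left in \<open>auto intro: islimpt_greaterThanLessThan2\<close>)
  then show "R b \<le> R a"
    using ab left by (cases "b < s") (auto simp: order_le_less)
next
  fix a b assume ab: "s \<le> a" "a \<le> b" "b \<le> 1"
  have "R s \<le> R b" if "s < b"
    by (rule lsc_le_of_islimpt[OF lsc, of "{s<..<b}"])
       (use that ab s right in \<open>auto intro: islimpt_greaterThanLessThan1\<close>)
  then show "R a \<le> R b"
    using ab right by (cases "s < a") (auto simp: order_le_less)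
qed

lemma single_trough_if_quasiconvex_lsc:
  fixes R :: "real \<Rightarrow> real"
  assumes quasi: "\<And>a b c. 0 < a \<Longrightarrow> a < b \<Longrightarrow> b < c \<Longrightarrow> c \<le> 1 \<Longrightarrow> R b \<le> max (R a) (R c)"
    and lsc: "\<And>l r. l \<in> {0<..1} \<Longrightarrow> r < R l \<Longrightarrow> eventually (\<lambda>x. r < R x) (at l within {0<..1})"
  shows "mono_on {0<..1} R
       \<or> antimono_on {0<..1} R
       \<or> (\<exists>lam0\<in>{0<..1}.
            (\<forall>a b. 0 < a \<and> a \<le> b \<and> b \<le> lam0 \<longrightarrow> R b \<le> R a)
          \<and> (\<forall>a b. lam0 \<le> a \<and> a \<le> b \<and> b \<le> 1 \<longrightarrow> R a \<le> R b))"
proof -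
  define B where "B = {b. 0 < b \<and> b \<le> 1 \<and> (\<exists>a. 0 < a \<and> a < b \<and> R a < R b)}"
  \<comment> \<open>\<open>R\<close> is nondecreasing to the right of every point of \<open>B\<close>, nonincreasing off \<open>B\<close>;
    the trough sits at \<open>Inf B\<close>.\<close>
  have up: "R x \<le> R y" if "b \<in> B" "b \<le> x" "x \<le> y" "y \<le> 1" for b x y
  proof -
    from \<open>b \<in> B\<close> obtain a where "0 < a" "a < b" "R a < R b"
      unfolding B_def by auto
    then show ?thesis
      using quasiconvex_nondecreasing_after_rise[of R, OF quasi] that by blast
  qed
  have down: "R y \<le> R x" if "0 < x" "x \<le> y" "y \<le> 1" "y \<notin> B" for x y
    using that unfolding B_def by (force simp: order_le_less)
  show ?thesis
  proof (cases "B = {}")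
    case True
    then have "antimono_on {0<..1} R"
      by (intro monotone_onI) (use down in auto)
    then show ?thesis by blast
  next
    case False
    define s where "s = Inf B"
    have "bdd_below B"
      unfolding B_def by (rule bdd_belowI[of _ 0]) auto
    then have s_le: "s \<le> b" if "b \<in> B" for b
      using that cInf_lower s_def by blast
    have above_s: "\<exists>b\<in>B. b < x" if "s < x" for x
      using that cInf_less_iff[OF False \<open>bdd_below B\<close>] s_def by auto
    have right: "R a \<le> R b" if "s < a" "a \<le> b" "b \<le> 1" for a b
      using up above_s that by fastforce
    have "0 \<le> s"
      unfolding s_def using False by (rule cInf_greatest) (auto simp: B_def)
    have "s \<le> 1"
      using False s_le unfolding B_def by force
    show ?thesis
    proof (cases "s = 0")
      case True
      then have "mono_on {0<..1} R"
        by (intro monotone_onI) (use right in auto)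
      then show ?thesis by blast
    next
      case False
      with \<open>0 \<le> s\<close> have "0 < s" by simp
      have left: "R b \<le> R a" if "0 < a" "a \<le> b" "b < s" for a b
      proof -
        have "b \<notin> B"
          using s_le[of b] \<open>b < s\<close> by auto
        then show ?thesis
          using down[of a b] that \<open>s \<le> 1\<close> by simp
      qed
      have "eventually (\<lambda>x. r < R x) (at s within {0<..1})" if "r < R s" for r
        using lsc that \<open>0 < s\<close> \<open>s \<le> 1\<close> by simp
      from trough_extends_to_endpoint[OF this \<open>0 < s\<close> \<open>s \<le> 1\<close> left right] show ?thesis
        using \<open>0 < s\<close> \<open>s \<le> 1\<close> by (intro disjI2 bexI[of _ s]) auto
    qed
  qed
qed

lemma convex_on_sum_fun:
  assumes "finite I" "convex S" "\<And>i. i \<in> I \<Longrightarrow> convex_on S (f i)"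
  shows "convex_on S (\<lambda>x. \<Sum>i\<in>I. f i x)"
  using assms by (induction I rule: finite_induct) (auto simp: convex_on_const)

lemma convex_on_le_max_between:
  fixes T :: "real \<Rightarrow> real"
  assumes "convex_on {l..u} T" "x \<in> {l..u}" "y \<in> {l..u}"
    and "x \<le> v \<and> v \<le> y \<or> y \<le> v \<and> v \<le> x"
  shows "T v \<le> max (T x) (T y)"
proof -
  have le_max: "T v \<le> max (T x') (T y')" if "x' \<in> {l..u}" "y' \<in> {l..u}" "x' \<le> v" "v \<le> y'" for x' y'
  proof -
    have "convex_on {x'..y'} T"
      by (rule convex_on_subset[OF assms(1)]) (use that in auto)
    then show ?thesis
      using that by (intro convex_on_le_max) auto
  qed
  from assms(4) show ?thesis
    using le_max[of x y] le_max[of y x] assms(2,3) by (auto simp: max.commute)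
qed

text \<open>\<open>A\<close> and \<open>B\<close> are the likelihoods of a signal pair under \<open>\<omega> = 1\<close> and \<open>\<omega> = 0\<close>, \<open>v\<close> is the
  prior; \<open>pair_loss\<close> is the contribution of the pair to the expected squared loss of a prediction.\<close>

definition posterior :: "real \<Rightarrow> real \<Rightarrow> real \<Rightarrow> real" where
  "posterior A B v = v * A / (v * A + (1 - v) * B)"

definition pair_loss :: "real \<Rightarrow> real \<Rightarrow> real \<Rightarrow> real \<Rightarrow> real" where
  "pair_loss A B v q = v * A * (q - 1)\<^sup>2 + (1 - v) * B * q\<^sup>2"

definition pair_regret :: "real \<Rightarrow> real \<Rightarrow> real \<Rightarrow> real \<Rightarrow> real" where
  "pair_regret A B y v = pair_loss A B v y - pair_loss A B v (posterior A B v)"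

lemma weighted_sq_loss_min:
  fixes a b q :: real
  assumes "0 \<le> a" "0 \<le> b"
  shows "a * (a / (a + b) - 1)\<^sup>2 + b * (a / (a + b))\<^sup>2 \<le> a * (q - 1)\<^sup>2 + b * q\<^sup>2"
proof (cases "a + b = 0")
  case True
  with assms have "a = 0" "b = 0" by auto
  then show ?thesis by simp
next
  case False
  define p where "p = a / (a + b)"
  have "a * (q - 1)\<^sup>2 + b * q\<^sup>2 - (a * (p - 1)\<^sup>2 + b * p\<^sup>2)
      = (a + b) * (q - p)\<^sup>2 + 2 * (p * (a + b) - a) * (q - p)"
    by (simp add: power2_eq_square algebra_simps)
  also have "p * (a + b) = a"
    using False unfolding p_def by simp
  finally have "a * (q - 1)\<^sup>2 + b * q\<^sup>2 - (a * (p - 1)\<^sup>2 + b * p\<^sup>2) = (a + b) * (q - p)\<^sup>2"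
    by simp
  moreover have "0 \<le> (a + b) * (q - p)\<^sup>2"
    using assms by simp
  ultimately show ?thesis
    unfolding p_def by linarith
qed

lemma pair_loss_posterior_le:
  assumes "0 \<le> A" "0 \<le> B" "0 \<le> v" "v \<le> 1"
  shows "pair_loss A B v (posterior A B v) \<le> pair_loss A B v q"
  using weighted_sq_loss_min[of "v * A" "(1 - v) * B" q] assms
  unfolding pair_loss_def posterior_def by simp

lemma pair_loss_affine:
  "pair_loss A B ((1 - t) * v1 + t * v2) q = (1 - t) * pair_loss A B v1 q + t * pair_loss A B v2 q"
  unfolding pair_loss_def by (simp add: algebra_simps)

text \<open>The Bayes risk \<open>pair_loss A B v (posterior A B v)\<close> is a minimum of functions affine in
  \<open>v\<close>, hence concave.\<close>
lemma convex_on_pair_regret: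
  assumes "0 \<le> A" "0 \<le> B"
  shows "convex_on {0..1} (pair_regret A B y)"
proof (rule convex_onI)
  fix t v1 v2 :: real
  assume t: "0 < t" "t < 1" and v: "v1 \<in> {0..1}" "v2 \<in> {0..1}"
  define v where "v = (1 - t) * v1 + t * v2"
  let ?L = "pair_loss A B" and ?p = "posterior A B"
  have "?L v1 (?p v1) \<le> ?L v1 (?p v)" "?L v2 (?p v2) \<le> ?L v2 (?p v)"
    using assms v by (simp_all add: pair_loss_posterior_le)
  then have "(1 - t) * ?L v1 (?p v1) + t * ?L v2 (?p v2) \<le> (1 - t) * ?L v1 (?p v) + t * ?L v2 (?p v)"
    using t by (intro add_mono mult_left_mono) auto
  moreover have "pair_regret A B y v = (1 - t) * ?L v1 y + t * ?L v2 y - ((1 - t) * ?L v1 (?p v) + t * ?L v2 (?p v))"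
    by (simp only: pair_regret_def v_def pair_loss_affine)
  ultimately have "pair_regret A B y v \<le> (1 - t) * pair_regret A B y v1 + t * pair_regret A B y v2"
    unfolding pair_regret_def right_diff_distrib by linarith
  then show "pair_regret A B y ((1 - t) *\<^sub>R v1 + t *\<^sub>R v2)
      \<le> (1 - t) * pair_regret A B y v1 + t * pair_regret A B y v2"
    by (simp add: v_def)
qed simp

lemma pair_regret_le:
  assumes "0 \<le> A" "0 \<le> B" "0 \<le> v" "v \<le> 1" "0 \<le> y" "y \<le> 1"
  shows "pair_regret A B y v \<le> v * A + (1 - v) * B"
proof -
  have "(y - 1)\<^sup>2 \<le> 1" "y\<^sup>2 \<le> 1"
    unfolding power2_commute[of y 1] using assms by (auto intro: power_le_one)
  then have "pair_loss A B v y \<le> v * A + (1 - v) * B"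
    unfolding pair_loss_def using assms
    by (intro add_mono mult_left_le) auto
  moreover have "0 \<le> pair_loss A B v (posterior A B v)"
    unfolding pair_loss_def using assms by (intro add_nonneg_nonneg mult_nonneg_nonneg) auto
  ultimately show ?thesis
    unfolding pair_regret_def by linarith
qed

lemma valid_IS_iff:
  "valid_IS (mu, S1, S2, P1, P2) \<longleftrightarrow> 0 < mu \<and> mu < 1 \<and> cond_dist S1 P1 \<and> cond_dist S2 P2"
  unfolding valid_IS_def by simp

text \<open>Expected regret of \<open>\<theta>\<close> at degree \<open>lam\<close> when the reports are kept but the prior is
  replaced by \<open>v\<close>.\<close>

definition report_regret :: "real \<Rightarrow> (real \<Rightarrow> real \<Rightarrow> real) \<Rightarrow> info_structure \<Rightarrow> real \<Rightarrow> real" where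
  "report_regret lam f \<theta> v = (case \<theta> of (mu, S1, S2, P1, P2) \<Rightarrow>
     \<Sum>s1\<in>S1. \<Sum>s2\<in>S2. pair_regret (P1 True s1 * P2 True s2) (P1 False s1 * P2 False s2)
       (f (report mu P1 s1 lam) (report mu P2 s2 lam)) v)"

lemma exp_regret_eq_report_regret:
  "exp_regret lam f (mu, S1, S2, P1, P2) = report_regret lam f (mu, S1, S2, P1, P2) mu"
  unfolding exp_regret_def UNIV_bool report_regret_def pair_regret_def pair_loss_def posterior_def
  by (simp add: sum.distrib[symmetric] prior_w_def sq_loss_def bayes_post_def algebra_simps)

lemma convex_on_report_regret:
  assumes "valid_IS (mu, S1, S2, P1, P2)"
  shows "convex_on {0..1} (report_regret lam f (mu, S1, S2, P1, P2))"
proof -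
  from assms have "finite S1" "finite S2" "\<And>w s. 0 \<le> P1 w s" "\<And>w s. 0 \<le> P2 w s"
    by (auto simp: valid_IS_iff cond_dist_def)
  then show ?thesis
    unfolding report_regret_def
    by (auto intro!: convex_on_sum_fun convex_on_pair_regret)
qed

lemma report_regret_le_one:
  assumes f01: "\<forall>x y. 0 \<le> x \<and> x \<le> 1 \<and> 0 \<le> y \<and> y \<le> 1 \<longrightarrow> 0 \<le> f x y \<and> f x y \<le> 1"
    and "valid_IS (mu, S1, S2, P1, P2)" and "0 \<le> v" "v \<le> 1"
  shows "report_regret lam f (mu, S1, S2, P1, P2) v \<le> 1"
proof -
  from assms(2) have P1: "cond_dist S1 P1" and P2: "cond_dist S2 P2"
    by (auto simp: valid_IS_iff)
  then have nonneg: "\<And>w s. 0 \<le> P1 w s" "\<And>w s. 0 \<le> P2 w s"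
    and total: "\<And>w. (\<Sum>s\<in>S1. P1 w s) = 1" "\<And>w. (\<Sum>s\<in>S2. P2 w s) = 1"
    by (auto simp: cond_dist_def)
  have report01: "0 \<le> report mu P s lam \<and> report mu P s lam \<le> 1"
    if "0 \<le> P True s" "0 \<le> P False s" for P s
  proof -
    have "0 \<le> mu powr lam * P True s" "0 \<le> (1 - mu) powr lam * P False s"
      using that by simp_all
    then show ?thesis
      unfolding report_def by (auto simp: divide_simps)
  qed
  have "report_regret lam f (mu, S1, S2, P1, P2) v \<le>
      (\<Sum>s1\<in>S1. \<Sum>s2\<in>S2. v * (P1 True s1 * P2 True s2) + (1 - v) * (P1 False s1 * P2 False s2))"
    unfolding report_regret_def prod.case
    using assms(3,4) nonneg report01 f01 by (intro sum_mono pair_regret_le) auto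
  also have "\<dots> = v * (\<Sum>s1\<in>S1. \<Sum>s2\<in>S2. P1 True s1 * P2 True s2)
      + (1 - v) * (\<Sum>s1\<in>S1. \<Sum>s2\<in>S2. P1 False s1 * P2 False s2)"
    by (simp add: sum.distrib sum_distrib_left)
  also have "\<dots> = v * ((\<Sum>s\<in>S1. P1 True s) * (\<Sum>s\<in>S2. P2 True s))
      + (1 - v) * ((\<Sum>s\<in>S1. P1 False s) * (\<Sum>s\<in>S2. P2 False s))"
    by (simp only: sum_product)
  also have "\<dots> = 1"
    by (simp add: total)
  finally show ?thesis .
qed

definition shifted_prior :: "real \<Rightarrow> real \<Rightarrow> real \<Rightarrow> real" where
  "shifted_prior mu lam lam' =
     (mu / (1 - mu)) powr (lam / lam') / (1 + (mu / (1 - mu)) powr (lam / lam'))"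

lemma shifted_prior_bounds:
  assumes "0 < mu" "mu < 1"
  shows "0 < shifted_prior mu lam lam'" "shifted_prior mu lam lam' < 1"
proof -
  define k where "k = (mu / (1 - mu)) powr (lam / lam')"
  have "0 < k"
    using assms unfolding k_def by simp
  then show "0 < shifted_prior mu lam lam'" "shifted_prior mu lam lam' < 1"
    unfolding shifted_prior_def k_def[symmetric] by simp_all
qed

lemma shifted_prior_odds:
  assumes "0 < mu" "mu < 1"
  shows "shifted_prior mu lam lam' / (1 - shifted_prior mu lam lam') = (mu / (1 - mu)) powr (lam / lam')"
proof -
  define k where "k = (mu / (1 - mu)) powr (lam / lam')"
  have "0 < k"
    using assms unfolding k_def by simp
  then show ?thesis
    unfolding shifted_prior_def k_def[symmetric] by (simp add: field_simps)
qed

lemma shifted_prior_self: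
  assumes "0 < mu" "mu < 1" "lam \<noteq> 0"
  shows "shifted_prior mu lam lam = mu"
  using assms unfolding shifted_prior_def by (simp add: field_simps)

lemma report_eq_odds:
  assumes "0 < mu" "mu < 1"
  shows "report mu P s lam =
    (mu / (1 - mu)) powr lam * P True s / ((mu / (1 - mu)) powr lam * P True s + P False s)"
proof -
  define K where "K = (mu / (1 - mu)) powr lam"
  define c where "c = (1 - mu) powr lam"
  have "mu powr lam = K * c" "0 < c"
    using assms unfolding K_def c_def by (simp_all add: powr_divide)
  then have "report mu P s lam = (c * (K * P True s)) / (c * (K * P True s + P False s))"
    unfolding report_def c_def[symmetric] by (simp add: algebra_simps)
  also have "\<dots> = K * P True s / (K * P True s + P False s)"
    using \<open>0 < c\<close> by simp
  finally show ?thesis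
    unfolding K_def .
qed

lemma report_shifted_prior:
  assumes "0 < mu" "mu < 1" "lam' \<noteq> 0"
  shows "report (shifted_prior mu lam lam') P s lam' = report mu P s lam"
proof -
  have "(shifted_prior mu lam lam' / (1 - shifted_prior mu lam lam')) powr lam' = (mu / (1 - mu)) powr lam"
    unfolding shifted_prior_odds[OF assms(1,2)] using assms by (simp add: powr_powr)
  then show ?thesis
    using report_eq_odds shifted_prior_bounds assms by simp
qed

lemma exp_regret_shifted_prior:
  assumes "0 < mu" "mu < 1" "lam' \<noteq> 0"
  shows "exp_regret lam' f (shifted_prior mu lam lam', S1, S2, P1, P2)
    = report_regret lam f (mu, S1, S2, P1, P2) (shifted_prior mu lam lam')"
  unfolding exp_regret_eq_report_regret report_regret_def prod.case report_shifted_prior[OF assms] ..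

lemma shifted_prior_between:
  assumes "0 < mu" "mu < 1" "0 < a" "a < b" "b < c"
  shows "shifted_prior mu b c \<le> mu \<and> mu \<le> shifted_prior mu b a
       \<or> shifted_prior mu b a \<le> mu \<and> mu \<le> shifted_prior mu b c"
proof -
  define od where "od = mu / (1 - mu)"
  define h :: "real \<Rightarrow> real" where "h x = x / (1 + x)" for x
  have "0 < od"
    using assms unfolding od_def by simp
  have h_mono: "h x \<le> h y" if "0 \<le> x" "x \<le> y" for x y
    using that unfolding h_def by (simp add: divide_simps algebra_simps)
  have sp: "shifted_prior mu b x = h (od powr (b / x))" for x
    unfolding shifted_prior_def od_def h_def ..
  have mu: "h (od powr 1) = mu"
    using assms unfolding od_def h_def by (simp add: field_simps)
  have "b / c \<le> 1" "1 \<le> b / a"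
    using assms by (simp_all add: divide_simps)
  then have "od powr (b / c) \<le> od powr 1 \<and> od powr 1 \<le> od powr (b / a)
           \<or> od powr (b / a) \<le> od powr 1 \<and> od powr 1 \<le> od powr (b / c)"
  proof (cases "1 \<le> od")
    case True
    then show ?thesis
      using powr_mono[OF \<open>b / c \<le> 1\<close>] powr_mono[OF \<open>1 \<le> b / a\<close>] by simp
  next
    case False
    then show ?thesis
      using powr_mono'[OF \<open>b / c \<le> 1\<close>, of od] powr_mono'[OF \<open>1 \<le> b / a\<close>, of od] \<open>0 < od\<close>
      by simp
  qed
  then have "h (od powr (b / c)) \<le> h (od powr 1) \<and> h (od powr 1) \<le> h (od powr (b / a))
           \<or> h (od powr (b / a)) \<le> h (od powr 1) \<and> h (od powr 1) \<le> h (od powr (b / c))"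
    by (auto intro: h_mono)
  then show ?thesis
    unfolding sp mu .
qed

lemma isCont_shifted_prior:
  assumes "0 < mu" "mu < 1" "lam' \<noteq> 0"
  shows "isCont (shifted_prior mu lam) lam'"
proof -
  have "0 < (mu / (1 - mu)) powr (lam / lam')"
    using assms by simp
  then have "1 + (mu / (1 - mu)) powr (lam / lam') \<noteq> 0"
    by linarith
  then show ?thesis
    unfolding shifted_prior_def using assms by (intro continuous_intros) auto
qed

lemma Theta_nonempty: "Theta \<noteq> {}"
proof -
  define P :: "bool \<Rightarrow> nat \<Rightarrow> real" where "P w s = (if s = 0 then 1 else 0)" for w s
  have "cond_dist {0} P"
    unfolding cond_dist_def P_def by simp
  then have "(1 / 2, {0}, {0}, P, P) \<in> Theta"
    unfolding Theta_def by (simp add: valid_IS_iff)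
  then show ?thesis by blast
qed

context
  fixes f :: "real \<Rightarrow> real \<Rightarrow> real"
  assumes f01: "\<forall>x y. 0 \<le> x \<and> x \<le> 1 \<and> 0 \<le> y \<and> y \<le> 1 \<longrightarrow> 0 \<le> f x y \<and> f x y \<le> 1"
begin

lemma bdd_above_exp_regret: "bdd_above ((\<lambda>\<theta>. exp_regret lam f \<theta>) ` Theta)"
proof (rule bdd_aboveI)
  fix r assume "r \<in> (\<lambda>\<theta>. exp_regret lam f \<theta>) ` Theta"
  then obtain mu S1 S2 P1 P2 where "r = exp_regret lam f (mu, S1, S2, P1, P2)"
    and valid: "valid_IS (mu, S1, S2, P1, P2)"
    unfolding Theta_def by auto
  moreover have "0 < mu" "mu < 1"
    using valid by (auto simp: valid_IS_iff)
  ultimately show "r \<le> 1"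
    using report_regret_le_one[OF f01 valid, of mu] by (simp add: exp_regret_eq_report_regret)
qed

lemma report_regret_shifted_prior_le_regret:
  assumes "valid_IS (mu, S1, S2, P1, P2)" "lam' \<noteq> 0"
  shows "report_regret lam f (mu, S1, S2, P1, P2) (shifted_prior mu lam lam') \<le> regret lam' f"
proof -
  have mu: "0 < mu" "mu < 1"
    using assms by (auto simp: valid_IS_iff)
  then have "(shifted_prior mu lam lam', S1, S2, P1, P2) \<in> Theta"
    using assms shifted_prior_bounds unfolding Theta_def by (auto simp: valid_IS_iff)
  then have "exp_regret lam' f (shifted_prior mu lam lam', S1, S2, P1, P2) \<le> regret lam' f"
    unfolding regret_def by (rule cSUP_upper[OF _ bdd_above_exp_regret])
  then show ?thesis
    unfolding exp_regret_shifted_prior[OF mu assms(2)] .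
qed

lemma regret_quasiconvex:
  assumes "0 < a" "a < b" "b < c"
  shows "regret b f \<le> max (regret a f) (regret c f)"
  unfolding regret_def[of b]
proof (rule cSUP_least[OF Theta_nonempty])
  fix \<theta> assume "\<theta> \<in> Theta"
  then obtain mu S1 S2 P1 P2 where \<theta>: "\<theta> = (mu, S1, S2, P1, P2)"
    and valid: "valid_IS (mu, S1, S2, P1, P2)"
    unfolding Theta_def by (cases \<theta>) auto
  then have mu: "0 < mu" "mu < 1"
    by (auto simp: valid_IS_iff)
  define T where "T = report_regret b f \<theta>"
  define va vc where "va = shifted_prior mu b a" and "vc = shifted_prior mu b c"
  have "T mu \<le> max (T va) (T vc)"
  proof (rule convex_on_le_max_between[where T = T and l = 0 and u = 1])
    show "convex_on {0..1} T"
      unfolding T_def \<theta> by (rule convex_on_report_regret[OF valid])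
    show "va \<in> {0..1}" "vc \<in> {0..1}"
      unfolding va_def vc_def using shifted_prior_bounds[OF mu] by (auto intro: less_imp_le)
    show "va \<le> mu \<and> mu \<le> vc \<or> vc \<le> mu \<and> mu \<le> va"
      unfolding va_def vc_def using shifted_prior_between[OF mu assms] by blast
  qed
  also have "\<dots> \<le> max (regret a f) (regret c f)"
    unfolding T_def va_def vc_def \<theta>
    using assms by (intro max.mono report_regret_shifted_prior_le_regret[OF valid]) auto
  finally show "exp_regret b f \<theta> \<le> max (regret a f) (regret c f)"
    unfolding T_def \<theta> exp_regret_eq_report_regret .
qed

lemma regret_lsc:
  assumes "lam \<in> {0<..1}" "r < regret lam f"
  shows "eventually (\<lambda>x. r < regret x f) (at lam within {0<..1})"
proof -
  obtain \<theta> where "\<theta> \<in> Theta" and r: "r < exp_regret lam f \<theta>"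
    using assms(2) less_cSUP_iff[OF Theta_nonempty bdd_above_exp_regret] unfolding regret_def by blast
  then obtain mu S1 S2 P1 P2 where \<theta>: "\<theta> = (mu, S1, S2, P1, P2)"
    and valid: "valid_IS (mu, S1, S2, P1, P2)"
    unfolding Theta_def by (cases \<theta>) auto
  then have mu: "0 < mu" "mu < 1"
    by (auto simp: valid_IS_iff)
  define T where "T = report_regret lam f \<theta>"
  define g where "g x = T (shifted_prior mu lam x)" for x
  have "lam \<noteq> 0"
    using assms(1) by simp
  have "g lam = exp_regret lam f \<theta>"
    unfolding g_def T_def \<theta> shifted_prior_self[OF mu \<open>lam \<noteq> 0\<close>] exp_regret_eq_report_regret ..
  have "continuous_on {0<..<1} T"
    unfolding T_def \<theta>
    by (intro convex_on_continuous convex_on_subset[OF convex_on_report_regret[OF valid]]) auto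
  then have "isCont T mu"
    using mu by (simp add: continuous_on_eq_continuous_at)
  then have "isCont g lam"
    unfolding g_def using isCont_shifted_prior[OF mu \<open>lam \<noteq> 0\<close>]
    by (simp add: isCont_o2 shifted_prior_self[OF mu \<open>lam \<noteq> 0\<close>])
  then have "eventually (\<lambda>x. r < g x) (at lam within {0<..1})"
    using r \<open>g lam = exp_regret lam f \<theta>\<close>
    by (intro order_tendstoD(1)) (auto simp: isCont_def intro: tendsto_within_subset)
  moreover have "g x \<le> regret x f" if "x \<in> {0<..1}" for x
    unfolding g_def T_def \<theta>
    using that by (intro report_regret_shifted_prior_le_regret[OF valid]) auto
  ultimately show ?thesis
    unfolding eventually_at_filter by (auto elim!: eventually_mono intro: order.strict_trans2)
qed

end

theorem mainTheorem1:
  fixes f :: "real \<Rightarrow> real \<Rightarrow> real"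
  assumes "\<forall>x y. 0 \<le> x \<and> x \<le> 1 \<and> 0 \<le> y \<and> y \<le> 1 \<longrightarrow> 0 \<le> f x y \<and> f x y \<le> 1"
  shows "mono_on {0<..1} (\<lambda>lam. regret lam f)
       \<or> antimono_on {0<..1} (\<lambda>lam. regret lam f)
       \<or> (\<exists>lam0\<in>{0<..1}.
            (\<forall>a b. 0 < a \<and> a \<le> b \<and> b \<le> lam0 \<longrightarrow> regret b f \<le> regret a f)
          \<and> (\<forall>a b. lam0 \<le> a \<and> a \<le> b \<and> b \<le> 1 \<longrightarrow> regret a f \<le> regret b f))"
  using single_trough_if_quasiconvex_lsc[of "\<lambda>lam. regret lam f"]
    regret_quasiconvex[OF assms] regret_lsc[OF assms]
  by auto

end
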